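(* Grounded semantics is serialisable with the selection function $\alpha_{gr}(X,Y,Z)=X$ and the termination function $\beta_{co}(F,S)=1$ if $\mathrm{IS}^u(F)=\emptyset$ and $\beta_{co}(F,S)=0$ otherwise.
   Context: An abstract argumentation framework (AF) is a pair $F=(A,R)$ with $A$ a finite subset of a fixed universal set of arguments $\mathfrak{A}$ and $R\subseteq A\times A$ ($a\to b$ means $(a,b)\in R$). For $S\subseteq A$: $S^+=\{a\mid \exists b\in S: b\to a\}$, $S^-=\{a\mid\exists b\in S: a\to b\}$; for sets $S,S'$, $S\to S'$ means $S^+\cap S'\neq\emptyset$. $S$ is admissible if it is conflict-free and every attacker of an element of $S$ is attacked by some element of $S$. A complete extension is an admissible set containing every argument it defends; the grounded extension is the inclusion-minimal complete extension, and grounded semantics assigns to $F$ the set containing it. An initial set is a non-empty admissible set with no non-empty admissible proper subset; $\mathrm{IS}(F)$ is the set of initial sets. An initial set $S$ is unattacked if $S^-=\emptyset$; unchallenged if $S^-\neq\emptyset$ and no $S'\in\mathrm{IS}(F)$ has $S'\to S$; challenged if some $S'\in\mathrm{IS}(F)$ has $S'\to S$. Write $\mathrm{IS}^{u}(F),\mathrm{IS}^{uc}(F),\mathrm{IS}^{c}(F)$ for these sets. The reduct is $F^S=(A',R\cap(A'\times A'))$ with $A'=A\setminus(S\cup S^+)$. A selection function $\alpha$ maps any three sets $X,Y,Z$ of sets of arguments to a subset of $X\cup Y\cup Z$; a termination function $\beta$ maps pairs $(F,S)$ to $\{0,1\}$. Transitions: $(F,S)\to(F^{S'},S\cup S')$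 whenever $S'\in\alpha(\mathrm{IS}^u(F),\mathrm{IS}^{uc}(F),\mathrm{IS}^c(F))$. $(F,S)\leadsto^{\alpha,\beta}(F',S')$ means $(F',S')$ is reachable from $(F,S)$ in finitely many (possibly zero) transitions and $\beta(F',S')=1$. $\mathcal{E}^{\alpha,\beta}(F)$ is the set of all $S$ with $(F,\emptyset)\leadsto^{\alpha,\beta}(F',S)$ for some $F'$. A semantics $\sigma$ is serialisable with $\alpha,\beta$ if $\sigma(F)=\mathcal{E}^{\alpha,\beta}(F)$ for all AFs $F$. *)

theory Defs
  imports Main
begin

type_synonym 'a af = "'a set \<times> ('a \<times> 'a) set"

definition is_AF :: "'a af \<Rightarrow> bool" where
  "is_AF F \<longleftrightarrow> finite (fst F) \<and> snd F \<subseteq> fst F \<times> fst F"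

definition plus_set :: "'a af \<Rightarrow> 'a set \<Rightarrow> 'a set" where
  "plus_set F S = {a. \<exists>b\<in>S. (b, a) \<in> snd F}"

definition minus_set :: "'a af \<Rightarrow> 'a set \<Rightarrow> 'a set" where
  "minus_set F S = {a. \<exists>b\<in>S. (a, b) \<in> snd F}"

definition attacks_set :: "'a af \<Rightarrow> 'a set \<Rightarrow> 'a set \<Rightarrow> bool" where
  "attacks_set F S S' \<longleftrightarrow> plus_set F S \<inter> S' \<noteq> {}"

definition conflict_free :: "'a af \<Rightarrow> 'a set \<Rightarrow> bool" where
  "conflict_free F S \<longleftrightarrow> (\<forall>a\<in>S. \<forall>b\<in>S. (a, b) \<notin> snd F)"

definition defends :: "'a af \<Rightarrow> 'a set \<Rightarrow> 'a \<Rightarrow> bool" where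
  "defends F S a \<longleftrightarrow> (\<forall>b. (b, a) \<in> snd F \<longrightarrow> (\<exists>c\<in>S. (c, b) \<in> snd F))"

definition admissible :: "'a af \<Rightarrow> 'a set \<Rightarrow> bool" where
  "admissible F S \<longleftrightarrow> S \<subseteq> fst F \<and> conflict_free F S \<and> (\<forall>a\<in>S. defends F S a)"

definition complete_ext :: "'a af \<Rightarrow> 'a set \<Rightarrow> bool" where
  "complete_ext F S \<longleftrightarrow> admissible F S \<and> (\<forall>a\<in>fst F. defends F S a \<longrightarrow> a \<in> S)"

definition grounded_sem :: "'a af \<Rightarrow> 'a set set" where
  "grounded_sem F = {S. complete_ext F S \<and> \<not> (\<exists>T. complete_ext F T \<and> T \<subset> S)}"

definition initial_set :: "'a af \<Rightarrow> 'a set \<Rightarrow> bool" where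
  "initial_set F S \<longleftrightarrow> S \<noteq> {} \<and> admissible F S \<and>
     \<not> (\<exists>T. T \<noteq> {} \<and> T \<subset> S \<and> admissible F T)"

definition IS :: "'a af \<Rightarrow> 'a set set" where
  "IS F = {S. initial_set F S}"

definition IS_u :: "'a af \<Rightarrow> 'a set set" where
  "IS_u F = {S \<in> IS F. minus_set F S = {}}"

definition IS_uc :: "'a af \<Rightarrow> 'a set set" where
  "IS_uc F = {S \<in> IS F. minus_set F S \<noteq> {} \<and> \<not> (\<exists>S'\<in>IS F. attacks_set F S' S)}"

definition IS_c :: "'a af \<Rightarrow> 'a set set" where
  "IS_c F = {S \<in> IS F. \<exists>S'\<in>IS F. attacks_set F S' S}"

definition reduct :: "'a af \<Rightarrow> 'a set \<Rightarrow> 'a af" where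
  "reduct F S = (let A' = fst F - (S \<union> plus_set F S) in (A', snd F \<inter> (A' \<times> A')))"

text \<open>Selection functions map three sets of sets of arguments to a subset of their union;
  termination functions map states (F, S) to 0/1 (rendered as bool: True = 1).\<close>
type_synonym 'a selection = "'a set set \<Rightarrow> 'a set set \<Rightarrow> 'a set set \<Rightarrow> 'a set set"
type_synonym 'a term_fun = "'a af \<Rightarrow> 'a set \<Rightarrow> bool"

definition selection_function :: "'a selection \<Rightarrow> bool" where
  "selection_function \<alpha> \<longleftrightarrow> (\<forall>X Y Z. \<alpha> X Y Z \<subseteq> X \<union> Y \<union> Z)"

inductive trans_step :: "'a selection \<Rightarrow> ('a af \<times> 'a set) \<Rightarrow> ('a af \<times> 'a set) \<Rightarrow> bool"
  for \<alpha> where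
  "S' \<in> \<alpha> (IS_u F) (IS_uc F) (IS_c F) \<Longrightarrow> trans_step \<alpha> (F, S) (reduct F S', S \<union> S')"

definition leadsto :: "'a selection \<Rightarrow> 'a term_fun \<Rightarrow> ('a af \<times> 'a set) \<Rightarrow> ('a af \<times> 'a set) \<Rightarrow> bool" where
  "leadsto \<alpha> \<beta> c c' \<longleftrightarrow> (trans_step \<alpha>)\<^sup>*\<^sup>* c c' \<and> \<beta> (fst c') (snd c')"

definition ext_ser :: "'a selection \<Rightarrow> 'a term_fun \<Rightarrow> 'a af \<Rightarrow> 'a set set" where
  "ext_ser \<alpha> \<beta> F = {S. \<exists>F'. leadsto \<alpha> \<beta> (F, {}) (F', S)}"

definition serialisable_with :: "('a af \<Rightarrow> 'a set set) \<Rightarrow> 'a selection \<Rightarrow> 'a term_fun \<Rightarrow> bool" where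
  "serialisable_with \<sigma> \<alpha> \<beta> \<longleftrightarrow> (\<forall>F. is_AF F \<longrightarrow> \<sigma> F = ext_ser \<alpha> \<beta> F)"

definition alpha_gr :: "'a selection" where
  "alpha_gr X Y Z = X"

definition beta_co :: "'a term_fun" where
  "beta_co F S \<longleftrightarrow> IS_u F = {}"

end

theory Submission
  imports Defs
begin

text \<open>An argument of the reduct \<open>F\<^sup>S\<close> is unattacked there exactly when \<open>S\<close> defends it in \<open>F\<close>.
  Consequently, adding an unattacked initial set of the current reduct keeps the accumulated
  set \<open>S\<close> admissible and inside every complete extension, since everything added is defended
  by \<open>S\<close>. Once the reduct has no unattacked initial set it has no unattacked argument (a single
  one would form such a set), so \<open>S\<close> contains every argument it defends: \<open>S\<close> is then the least
  complete extension, i.e. the grounded one. Each step removes a non-empty set of arguments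
  from the finite reduct, so this point is always reached.\<close>

lemma fst_reduct: "fst (reduct F S) = fst F - (S \<union> plus_set F S)"
  by (simp add: reduct_def Let_def)

lemma snd_reduct: "snd (reduct F S) = snd F \<inter> (fst (reduct F S) \<times> fst (reduct F S))"
  by (simp add: reduct_def Let_def)

lemma reduct_empty:
  assumes "snd F \<subseteq> fst F \<times> fst F"
  shows "reduct F {} = F"
  using assms by (auto simp: reduct_def Let_def plus_set_def prod_eq_iff)

lemma reduct_reduct:
  assumes "S' \<subseteq> fst (reduct F S)"
  shows "reduct (reduct F S) S' = reduct F (S \<union> S')"
proof -
  have "plus_set (reduct F S) S' = plus_set F S' \<inter> fst (reduct F S)"
    using assms by (auto simp: plus_set_def snd_reduct)
  then have "fst (reduct (reduct F S) S') = fst (reduct F (S \<union> S'))"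
    by (auto simp: fst_reduct plus_set_def)
  moreover have "fst (reduct (reduct F S) S') \<subseteq> fst (reduct F S)"
    by (auto simp: fst_reduct)
  ultimately show ?thesis
    by (auto simp: prod_eq_iff snd_reduct[of "reduct F S"] snd_reduct[of F])
qed

lemma unattacked_in_reduct_iff_defends:
  assumes rel: "snd F \<subseteq> fst F \<times> fst F" and a: "a \<in> fst (reduct F S)"
  shows "(\<forall>b. (b, a) \<notin> snd (reduct F S)) \<longleftrightarrow> defends F S a"
proof
  assume unattacked: "\<forall>b. (b, a) \<notin> snd (reduct F S)"
  show "defends F S a"
    unfolding defends_def
  proof (intro allI impI)
    fix b
    assume ba: "(b, a) \<in> snd F"
    then have "b \<notin> fst (reduct F S)"
      using unattacked a by (auto simp: snd_reduct)
    moreover have "b \<in> fst F" and "b \<notin> S"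
      using ba rel a by (auto simp: fst_reduct plus_set_def)
    ultimately show "\<exists>c\<in>S. (c, b) \<in> snd F"
      by (auto simp: fst_reduct plus_set_def)
  qed
next
  assume "defends F S a"
  then show "\<forall>b. (b, a) \<notin> snd (reduct F S)"
    by (auto simp: defends_def snd_reduct fst_reduct plus_set_def)
qed

lemma defended_in_reduct:
  assumes adm: "admissible F S" and a: "a \<in> fst F - S" and def: "defends F S a"
  shows "a \<in> fst (reduct F S)"
proof -
  have "a \<notin> plus_set F S"
  proof
    assume "a \<in> plus_set F S"
    then obtain s where "s \<in> S" "(s, a) \<in> snd F"
      by (auto simp: plus_set_def)
    with def obtain c where "c \<in> S" "(c, s) \<in> snd F"
      by (auto simp: defends_def)
    with \<open>s \<in> S\<close> adm show False
      by (auto simp: admissible_def conflict_free_def)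
  qed
  with a show ?thesis
    by (simp add: fst_reduct)
qed

lemma unattacked_singleton_in_IS_u:
  assumes "a \<in> fst F" and "\<forall>b. (b, a) \<notin> snd F"
  shows "{a} \<in> IS_u F"
  using assms by (auto simp: IS_u_def IS_def initial_set_def admissible_def conflict_free_def
      defends_def minus_set_def)

lemma IS_u_reduct_defended:
  assumes "snd F \<subseteq> fst F \<times> fst F" and "S' \<in> IS_u (reduct F S)" and "a \<in> S'"
  shows "defends F S a"
proof -
  have "S' \<subseteq> fst (reduct F S)" and "minus_set (reduct F S) S' = {}"
    using assms(2) by (auto simp: IS_u_def IS_def initial_set_def admissible_def)
  with assms show ?thesis
    by (auto simp: minus_set_def simp flip: unattacked_in_reduct_iff_defends)
qed

lemma defends_mono: "S \<subseteq> T \<Longrightarrow> defends F S a \<Longrightarrow> defends F T a"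
  unfolding defends_def by blast

lemma conflict_free_of_reduct:
  "S' \<subseteq> fst (reduct F S) \<Longrightarrow> conflict_free (reduct F S) S' \<Longrightarrow> conflict_free F S'"
  by (auto simp: conflict_free_def snd_reduct)

lemma admissible_Un_defended:
  assumes adm: "admissible F S" and sub: "S' \<subseteq> fst (reduct F S)"
    and cf: "conflict_free F S'" and def: "\<forall>a\<in>S'. defends F S a"
  shows "admissible F (S \<union> S')"
proof -
  have not_attacked: "(s, a) \<notin> snd F" if "s \<in> S" "a \<in> S'" for s a
    using that sub by (auto simp: fst_reduct plus_set_def)
  \<comment> \<open>an attack from \<open>S'\<close> on \<open>S\<close> would be countered by \<open>S\<close>, putting its source in \<open>S\<^sup>+\<close>\<close>
  have not_attacking: "(a, s) \<notin> snd F" if "s \<in> S" "a \<in> S'" for s a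
    using that adm not_attacked by (fastforce simp: admissible_def defends_def)
  have "conflict_free F (S \<union> S')"
    using adm cf not_attacked not_attacking by (auto simp: admissible_def conflict_free_def)
  moreover have "defends F (S \<union> S') a" if "a \<in> S \<union> S'" for a
    using that adm def defends_mono[of S "S \<union> S'" F] unfolding admissible_def by blast
  ultimately show ?thesis
    using adm sub by (auto simp: admissible_def fst_reduct)
qed

lemma complete_if_IS_u_reduct_empty:
  assumes "snd F \<subseteq> fst F \<times> fst F" and adm: "admissible F S" and "IS_u (reduct F S) = {}"
  shows "complete_ext F S"
proof -
  have "a \<in> S" if "a \<in> fst F" and "defends F S a" for a
  proof (rule ccontr)
    assume "a \<notin> S"
    with adm that have a: "a \<in> fst (reduct F S)"
      by (simp add: defended_in_reduct)
    with assms(1) that(2) have "\<forall>b. (b, a) \<notin> snd (reduct F S)"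
      by (simp add: unattacked_in_reduct_iff_defends)
    with a have "{a} \<in> IS_u (reduct F S)"
      by (rule unattacked_singleton_in_IS_u)
    with assms(3) show False by simp
  qed
  with adm show ?thesis by (simp add: complete_ext_def)
qed

lemma trans_step_alpha_gr_iff:
  "trans_step alpha_gr (F, S) (F', S'') \<longleftrightarrow>
    (\<exists>S'\<in>IS_u F. F' = reduct F S' \<and> S'' = S \<union> S')"
  by (simp add: trans_step.simps alpha_gr_def) blast

lemma reachable_state_invariant:
  assumes rel: "snd F \<subseteq> fst F \<times> fst F" and "(trans_step alpha_gr)\<^sup>*\<^sup>* (F, {}) (F', S)"
  shows "F' = reduct F S \<and> admissible F S \<and> (\<forall>T. complete_ext F T \<longrightarrow> S \<subseteq> T)"
  using assms(2)
proof (induction rule: rtranclp_induct2)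
  case refl
  show ?case
    using reduct_empty[OF rel] by (simp add: admissible_def conflict_free_def defends_def)
next
  case (step G S G'' S'')
  from step.IH have G: "G = reduct F S" and adm: "admissible F S"
    and least: "\<forall>T. complete_ext F T \<longrightarrow> S \<subseteq> T"
    by simp_all
  from step.hyps(2) obtain S' where S': "S' \<in> IS_u (reduct F S)"
    and G'': "G'' = reduct (reduct F S) S'" and S'': "S'' = S \<union> S'"
    unfolding G trans_step_alpha_gr_iff by blast
  have sub: "S' \<subseteq> fst (reduct F S)" and cf: "conflict_free (reduct F S) S'"
    using S' by (auto simp: IS_u_def IS_def initial_set_def admissible_def)
  have def: "\<forall>a\<in>S'. defends F S a"
    using IS_u_reduct_defended[OF rel S'] by blast
  have "S' \<subseteq> T" if T: "complete_ext F T" for T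
  proof
    fix a
    assume a: "a \<in> S'"
    from least T have "S \<subseteq> T"
      by blast
    from defends_mono[OF this] def a have "defends F T a"
      by blast
    moreover have "a \<in> fst F"
      using a sub by (simp add: fst_reduct subset_iff)
    ultimately show "a \<in> T"
      using T by (simp add: complete_ext_def)
  qed
  with least have "\<forall>T. complete_ext F T \<longrightarrow> S'' \<subseteq> T"
    using S'' by blast
  moreover have "admissible F S''"
    unfolding S'' by (rule admissible_Un_defended[OF adm sub conflict_free_of_reduct[OF sub cf] def])
  ultimately show ?case
    using G'' S'' reduct_reduct[OF sub] by blast
qed

lemma terminal_state_reachable:
  "finite (fst F) \<Longrightarrow> \<exists>F' S'. (trans_step alpha_gr)\<^sup>*\<^sup>* (F, S) (F', S') \<and> IS_u F' = {}"
proof (induction "card (fst F)" arbitrary: F S rule: less_induct)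
  case less
  show ?case
  proof (cases "IS_u F = {}")
    case False
    then obtain S' where S': "S' \<in> IS_u F" by auto
    then have step: "trans_step alpha_gr (F, S) (reduct F S', S \<union> S')"
      by (intro trans_step.intros) (simp add: alpha_gr_def)
    have "S' \<noteq> {}" and "S' \<subseteq> fst F"
      using S' by (auto simp: IS_u_def IS_def initial_set_def admissible_def)
    then have "fst (reduct F S') \<subset> fst F"
      by (auto simp: fst_reduct)
    then obtain F' S'' where "(trans_step alpha_gr)\<^sup>*\<^sup>* (reduct F S', S \<union> S') (F', S'')"
      and "IS_u F' = {}"
      using less by (meson psubset_card_mono rev_finite_subset psubset_imp_subset)
    then show ?thesis
      using step converse_rtranclp_into_rtranclp by metis
  qed blast
qed

lemma grounded_sem_eq_least_complete:
  assumes "complete_ext F S" and "\<forall>T. complete_ext F T \<longrightarrow> S \<subseteq> T"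
  shows "grounded_sem F = {S}"
  using assms by (auto simp: grounded_sem_def)

lemma grounded_sem_eq_if_serialised:
  assumes rel: "snd F \<subseteq> fst F \<times> fst F" and "S \<in> ext_ser alpha_gr beta_co F"
  shows "grounded_sem F = {S}"
proof -
  from assms(2) obtain F' where reach: "(trans_step alpha_gr)\<^sup>*\<^sup>* (F, {}) (F', S)"
    and terminal: "IS_u F' = {}"
    by (auto simp: ext_ser_def leadsto_def beta_co_def)
  from reachable_state_invariant[OF rel reach] terminal
  have "complete_ext F S" and "\<forall>T. complete_ext F T \<longrightarrow> S \<subseteq> T"
    using complete_if_IS_u_reduct_empty[OF rel] by auto
  then show ?thesis
    by (rule grounded_sem_eq_least_complete)
qed

lemma ext_ser_alpha_gr_beta_co_nonempty:
  assumes "finite (fst F)"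
  shows "ext_ser alpha_gr beta_co F \<noteq> {}"
  using terminal_state_reachable[OF assms, of "{}"]
  by (auto simp: ext_ser_def leadsto_def beta_co_def)

theorem theorem4:
  shows "selection_function alpha_gr \<and> serialisable_with grounded_sem alpha_gr beta_co"
proof
  show "selection_function alpha_gr"
    by (auto simp: selection_function_def alpha_gr_def)
  show "serialisable_with grounded_sem alpha_gr beta_co"
    unfolding serialisable_with_def
  proof (intro allI impI)
    fix F
    assume "is_AF F"
    then have rel: "snd F \<subseteq> fst F \<times> fst F" and fin: "finite (fst F)"
      by (simp_all add: is_AF_def)
    from ext_ser_alpha_gr_beta_co_nonempty[OF fin]
    obtain S where S: "S \<in> ext_ser alpha_gr beta_co F"
      by blast
    have "S' = S" if "S' \<in> ext_ser alpha_gr beta_co F" for S'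
      using grounded_sem_eq_if_serialised[OF rel] that S by (metis singleton_inject)
    with S have "ext_ser alpha_gr beta_co F = {S}"
      by blast
    with grounded_sem_eq_if_serialised[OF rel S]
    show "grounded_sem F = ext_ser alpha_gr beta_co F"
      by simp
  qed
qed

end
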